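(* Let $a,c>0$ and $b,d<0$ be real numbers with $x_A<x_B$, and let $W_0(z)=1$, $W_1(z)=z$, $W_n(z)=(az+b)W_{n-1}(z)+(cz+d)W_{n-2}(z)$ for $n\ge2$. Then $u,v$ are real and $$u\le x_\Delta^-<x_A<x_\Delta^+\le v<x_B,\qquad u<0<v,$$ and for every $n\ge0$, $(-1)^nW_n(u)>0$ and $W_n(v)>0$. Moreover, both $u$ and $v$ are limits of zeros of $\{W_n(z)\}$.
   Context: Notation: $A(z)=az+b$, $B(z)=cz+d$, $x_A=-b/a$, $x_B=-d/c$, $\Delta_\Delta=c^2-a^2B(x_A)$ (positive here), $x_\Delta^\pm=x_A+\frac{-2c\pm2\sqrt{\Delta_\Delta}}{a^2}$, $g(z)=(1-a)z^2-(b+c)z-d$, $\Delta_g=(b+c)^2+4d(1-a)$, $F=\Delta_g-\Delta_\Delta=d(a-2)^2+bc(2-a)+b^2$. The zeros of $g$ are $x_g^\pm=\frac{b+c}{2(1-a)}\pm\frac{\sqrt{\Delta_g}}{2|1-a|}$ if $a\neq1$, and $x_g^\pm=-d/(b+c)$ if $a=1$ and $b+c\ne0$. Define $(u,v)=(x_\Delta^-,x_\Delta^+)$ if $a<2$ and $F\le0$; $(u,v)=(x_g^-,x_g^+)$ if $a>2$ and $F<0$; $(u,v)=(x_g^+,x_\Delta^+)$ if $a<1$ and $F>0$; and $(u,v)=(x_g^-,x_\Delta^+)$ in all other cases. A number $z^*$ is a limit of zeros of $\{W_n\}$ if there exist zeros $z_n$ of $W_n$ with $z_n\to z^*$. *)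

theory Defs
  imports "HOL-Analysis.Analysis"
begin

fun W :: "'a::comm_ring_1 \<Rightarrow> 'a \<Rightarrow> 'a \<Rightarrow> 'a \<Rightarrow> nat \<Rightarrow> 'a \<Rightarrow> 'a" where
  "W a b c d 0 z = 1"
| "W a b c d (Suc 0) z = z"
| "W a b c d (Suc (Suc n)) z =
     (a * z + b) * W a b c d (Suc n) z + (c * z + d) * W a b c d n z"

definition xA :: "real \<Rightarrow> real \<Rightarrow> real" where
  "xA a b = - b / a"

definition xB :: "real \<Rightarrow> real \<Rightarrow> real" where
  "xB c d = - d / c"

definition DeltaD :: "real \<Rightarrow> real \<Rightarrow> real \<Rightarrow> real \<Rightarrow> real" where
  "DeltaD a b c d = c\<^sup>2 - a\<^sup>2 * (c * xA a b + d)"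

definition xD_minus :: "real \<Rightarrow> real \<Rightarrow> real \<Rightarrow> real \<Rightarrow> real" where
  "xD_minus a b c d = xA a b + (- 2 * c - 2 * sqrt (DeltaD a b c d)) / a\<^sup>2"

definition xD_plus :: "real \<Rightarrow> real \<Rightarrow> real \<Rightarrow> real \<Rightarrow> real" where
  "xD_plus a b c d = xA a b + (- 2 * c + 2 * sqrt (DeltaD a b c d)) / a\<^sup>2"

definition Deltag :: "real \<Rightarrow> real \<Rightarrow> real \<Rightarrow> real \<Rightarrow> real" where
  "Deltag a b c d = (b + c)\<^sup>2 + 4 * d * (1 - a)"

definition Fq :: "real \<Rightarrow> real \<Rightarrow> real \<Rightarrow> real \<Rightarrow> real" where
  "Fq a b c d = d * (a - 2)\<^sup>2 + b * c * (2 - a) + b\<^sup>2"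

text \<open>Zeros of g, taken in the complex numbers (complex square root), so that their
  realness is part of the claim.  Undefined when a = 1 and b + c = 0.\<close>
definition xg_minus :: "real \<Rightarrow> real \<Rightarrow> real \<Rightarrow> real \<Rightarrow> complex" where
  "xg_minus a b c d =
     (if a \<noteq> 1 then complex_of_real ((b + c) / (2 * (1 - a)))
                     - csqrt (complex_of_real (Deltag a b c d)) / complex_of_real (2 * \<bar>1 - a\<bar>)
      else if b + c \<noteq> 0 then complex_of_real (- d / (b + c)) else undefined)"

definition xg_plus :: "real \<Rightarrow> real \<Rightarrow> real \<Rightarrow> real \<Rightarrow> complex" where
  "xg_plus a b c d =
     (if a \<noteq> 1 then complex_of_real ((b + c) / (2 * (1 - a)))
                     + csqrt (complex_of_real (Deltag a b c d)) / complex_of_real (2 * \<bar>1 - a\<bar>)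
      else if b + c \<noteq> 0 then complex_of_real (- d / (b + c)) else undefined)"

definition uv :: "real \<Rightarrow> real \<Rightarrow> real \<Rightarrow> real \<Rightarrow> complex \<times> complex" where
  "uv a b c d =
     (if a < 2 \<and> Fq a b c d \<le> 0 then
        (complex_of_real (xD_minus a b c d), complex_of_real (xD_plus a b c d))
      else if a > 2 \<and> Fq a b c d < 0 then (xg_minus a b c d, xg_plus a b c d)
      else if a < 1 \<and> Fq a b c d > 0 then (xg_plus a b c d, complex_of_real (xD_plus a b c d))
      else (xg_minus a b c d, complex_of_real (xD_plus a b c d)))"

text \<open>z* is a limit of zeros of (W_n): there are zeros z_n of W_n (for all large n,
  since W_0 = 1 has no zeros) with z_n \<longrightarrow> z*.\<close>
definition limit_of_zeros :: "real \<Rightarrow> real \<Rightarrow> real \<Rightarrow> real \<Rightarrow> complex \<Rightarrow> bool" where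
  "limit_of_zeros a b c d zs \<longleftrightarrow>
     (\<exists>z :: nat \<Rightarrow> complex.
        (\<forall>\<^sub>F n in sequentially.
           W (complex_of_real a) (complex_of_real b) (complex_of_real c) (complex_of_real d) n (z n) = 0)
        \<and> z \<longlonglongrightarrow> zs)"

end

theory Submission
  imports Defs
begin

text \<open>
  W_n satisfies a three-term recurrence whose characteristic equation at z is
  \<lambda>^2 = (a z + b) \<lambda> + (c z + d), with discriminant
  (a z + b)^2 + 4 (c z + d) = a^2 (z - x_\<Delta>^-) (z - x_\<Delta>^+).  Between x_\<Delta>^- and x_\<Delta>^+ the
  characteristic roots are complex conjugate and W_n has Chebyshev form, which is negative
  at nodes accumulating at x_\<Delta>^+; so x_\<Delta>^+ is a limit of zeros as soon as all W_n(x_\<Delta>^+) > 0,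
  which holds when the double root (a z + b)/2 lies in (0, z].  Symmetrically for x_\<Delta>^-, with
  alternating signs.  Otherwise the endpoint is a zero of g, i.e. a point z at which \<lambda> = z is
  itself a characteristic root.  There W_n(z) = z^n, and if the other root a z + b - z
  dominates, Binet's formula shows that W_n changes sign across z for large n.  The case
  distinction defining u and v is governed by the point z = b/(2 - a), where the discriminant
  has the sign of F and g has the sign of -F.
\<close>

section \<open>The recurrence\<close>

lemma W_of_real:
  "W (of_real a) (of_real b) (of_real c) (of_real d) n (of_real x) = of_real (W a b c d n x)"
  by (induction a b c d n x rule: W.induct) auto

lemma continuous_on_W: "continuous_on S (W a b c d n :: real \<Rightarrow> real)"
proof -
  have "continuous_on S (W a b c d n) \<and> continuous_on S (W a b c d (Suc n))"
    by (induction n) (auto intro!: continuous_intros)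
  then show ?thesis by blast
qed

lemma W_reflect: "W a (- b) (- c) d n (- x) = (- 1) ^ n * W a b c d n x"
  by (induction a b c d n x rule: W.induct) (auto simp: algebra_simps)

lemma W_Suc_eq:
  fixes l m :: "'a::comm_ring_1"
  assumes "l + m = a * x + b" and "l * m = - (c * x + d)"
  shows "W a b c d (Suc n) x = m * W a b c d n x + l ^ n * (x - m)"
proof -
  have "W a b c d (Suc n) x - m * W a b c d n x = l ^ n * (x - m)"
  proof (induction n)
    case 0
    then show ?case by simp
  next
    case (Suc n)
    have "c * x + d = - (l * m)"
      using assms(2) by simp
    then have "W a b c d (Suc (Suc n)) x - m * W a b c d (Suc n) x
        = l * (W a b c d (Suc n) x - m * W a b c d n x)"
      by (simp only: W.simps assms(1)[symmetric]) (simp add: algebra_simps)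
    then show ?case
      using Suc by simp
  qed
  then show ?thesis
    by (simp add: algebra_simps)
qed

lemma W_Binet:
  fixes l1 l2 :: "'a::comm_ring_1"
  assumes "l1 + l2 = a * x + b" and "l1 * l2 = - (c * x + d)"
  shows "W a b c d n x * (l1 - l2) = (x - l2) * l1 ^ n - (x - l1) * l2 ^ n"
proof -
  have "W a b c d (Suc n) x = l2 * W a b c d n x + l1 ^ n * (x - l2)"
    by (rule W_Suc_eq[OF assms])
  moreover have "W a b c d (Suc n) x = l1 * W a b c d n x + l2 ^ n * (x - l1)"
    by (rule W_Suc_eq) (use assms in \<open>simp_all add: algebra_simps\<close>)
  ultimately show ?thesis
    by (simp add: algebra_simps)
qed

lemma W_char_root:
  fixes x :: "'a::comm_ring_1"
  assumes "x ^ 2 = (a * x + b) * x + (c * x + d)"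
  shows "W a b c d n x = x ^ n"
proof (induction n)
  case 0
  then show ?case by simp
next
  case (Suc n)
  have "W a b c d (Suc n) x = x * W a b c d n x + (a * x + b - x) ^ n * (x - x)"
    by (rule W_Suc_eq) (use assms in \<open>simp_all add: power2_eq_square algebra_simps\<close>)
  then show ?case
    using Suc by simp
qed

lemma W_pos_at_double_root:
  fixes l x :: real
  assumes "2 * l = a * x + b" and "l ^ 2 = - (c * x + d)" and "0 < l" and "l \<le> x"
  shows "W a b c d n x > 0"
proof (induction n)
  case 0
  then show ?case by simp
next
  case (Suc n)
  have "W a b c d (Suc n) x = l * W a b c d n x + l ^ n * (x - l)"
    by (rule W_Suc_eq) (use assms in \<open>simp_all add: power2_eq_square\<close>)
  then show ?case
    using Suc assms(3,4) by (simp add: add_pos_nonneg)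
qed

lemma W_alternating_at_double_root:
  fixes l x :: real
  assumes "2 * l = a * x + b" and "l ^ 2 = - (c * x + d)" and "l < 0" and "x \<le> l"
  shows "(- 1) ^ n * W a b c d n x > 0"
proof -
  have "W a (- b) (- c) d n (- x) > 0"
    by (rule W_pos_at_double_root[of "- l"]) (use assms in simp_all)
  then show ?thesis
    by (simp add: W_reflect)
qed

lemma sin_Suc_Suc_mult:
  "sin (real (Suc (Suc n)) * t) = 2 * cos t * sin (real (Suc n) * t) - sin (real n * t)"
proof -
  have "sin (real (Suc n) * t + t) + sin (real (Suc n) * t - t) = 2 * cos t * sin (real (Suc n) * t)"
    by (simp add: sin_add sin_diff)
  then show ?thesis
    by (simp add: algebra_simps)
qed

lemma W_Chebyshev:
  fixes a b c d x r t :: real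
  assumes "a * x + b = 2 * r * cos t" and "c * x + d = - (r ^ 2)"
  shows "W a b c d (Suc n) x * sin t = r ^ n * (x * sin (real (Suc n) * t) - r * sin (real n * t))"
proof -
  have "W a b c d (Suc n) x * sin t = r ^ n * (x * sin (real (Suc n) * t) - r * sin (real n * t)) \<and>
    W a b c d (Suc (Suc n)) x * sin t
      = r ^ Suc n * (x * sin (real (Suc (Suc n)) * t) - r * sin (real (Suc n) * t))"
  proof (induction n)
    case 0
    have "sin (2 * t) = 2 * sin t * cos t"
      by (rule sin_double)
    then show ?case
      using assms by (simp add: algebra_simps power2_eq_square)
  next
    case (Suc n)
    have "W a b c d (Suc (Suc (Suc n))) x * sin t
        = 2 * r * cos t * (W a b c d (Suc (Suc n)) x * sin t) - r ^ 2 * (W a b c d (Suc n) x * sin t)"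
      by (simp only: W.simps assms) (simp add: algebra_simps)
    also have "\<dots> = r ^ Suc (Suc n) *
        (x * sin (real (Suc (Suc (Suc n))) * t) - r * sin (real (Suc (Suc n)) * t))"
      using Suc by (simp only: sin_Suc_Suc_mult) (simp add: algebra_simps power2_eq_square)
    finally show ?case
      using Suc by simp
  qed
  then show ?thesis by blast
qed

lemma W_neg_at_Chebyshev_node:
  fixes a b c d x r :: real
  assumes "a * x + b = 2 * r * cos (pi / real N)" and "c * x + d = - (r ^ 2)"
    and "N \<ge> 2" and "r > 0"
  shows "W a b c d N x < 0"
proof -
  obtain m where N: "N = Suc m"
    using assms(3) by (cases N) auto
  define t where "t = pi / real N"
  have "sin t > 0"
    using assms(3) by (auto simp: t_def field_simps intro!: sin_gt_zero)
  have "real (Suc m) * t = pi" and "real m * t = pi - t"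
    using N by (simp_all add: t_def field_simps)
  then have "W a b c d N x * sin t = - (r ^ N) * sin t"
    using W_Chebyshev[OF assms(1,2)[folded t_def], of m] N by simp
  then have "W a b c d N x = - (r ^ N)"
    using \<open>sin t > 0\<close> by (metis less_irrefl mult_minus_left mult_right_cancel)
  then show ?thesis
    using assms(4) by simp
qed

section \<open>Accumulation of zeros at a double characteristic root\<close>

definition zeros_accumulate_at :: "real \<Rightarrow> real \<Rightarrow> real \<Rightarrow> real \<Rightarrow> real \<Rightarrow> bool" where
  "zeros_accumulate_at a b c d p \<longleftrightarrow>
     (\<forall>e>0. \<forall>\<^sub>F n in sequentially. \<exists>x. \<bar>x - p\<bar> < e \<and> W a b c d n x = 0)"

text \<open>Choosing for each n a zero of W_n nearest to p gives the required sequence.\<close>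
lemma limit_of_zeros_of_real:
  assumes "zeros_accumulate_at a b c d p"
  shows "limit_of_zeros a b c d (complex_of_real p)"
proof -
  define Z where "Z n = {x. W a b c d n x = 0}" for n
  define z where "z n = (SOME x. x \<in> Z n \<and> (\<forall>y\<in>Z n. dist p x \<le> dist p y))" for n
  have nearest: "z n \<in> Z n \<and> (\<forall>y\<in>Z n. dist p (z n) \<le> dist p y)" if zero: "y \<in> Z n" for n y
  proof -
    have "closed (Z n)"
      unfolding Z_def by (intro closed_Collect_eq continuous_on_W continuous_on_const)
    then obtain x where "x \<in> Z n" "\<And>y. y \<in> Z n \<Longrightarrow> dist p x \<le> dist p y"
      by (rule distance_attains_inf) (use zero in auto)
    then show ?thesis
      unfolding z_def by (intro someI_ex[where P = "\<lambda>x. x \<in> Z n \<and> (\<forall>y\<in>Z n. dist p x \<le> dist p y)"]) blast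
  qed
  have close: "\<forall>\<^sub>F n in sequentially. z n \<in> Z n \<and> dist (z n) p < e" if "e > 0" for e
  proof -
    have "\<forall>\<^sub>F n in sequentially. \<exists>x. \<bar>x - p\<bar> < e \<and> W a b c d n x = 0"
      using assms that unfolding zeros_accumulate_at_def by blast
    then show ?thesis
    proof eventually_elim
      case (elim n)
      then obtain x where "\<bar>x - p\<bar> < e" and "x \<in> Z n"
        by (auto simp: Z_def)
      with nearest[OF \<open>x \<in> Z n\<close>] show ?case
        by (auto simp: dist_real_def abs_minus_commute)
    qed
  qed
  have "z \<longlonglongrightarrow> p"
    by (rule tendstoI) (use close in \<open>blast intro: eventually_mono\<close>)
  moreover have "\<forall>\<^sub>F n in sequentially.
      W (complex_of_real a) (of_real b) (of_real c) (of_real d) n (of_real (z n)) = 0"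
    using close[OF zero_less_one] by eventually_elim (simp add: W_of_real Z_def)
  ultimately show ?thesis
    unfolding limit_of_zeros_def by (intro exI[of _ "\<lambda>n. of_real (z n)"] conjI tendsto_of_real)
qed

lemma zeros_accumulate_at_reflect:
  assumes "zeros_accumulate_at a (- b) (- c) d (- p)"
  shows "zeros_accumulate_at a b c d p"
  unfolding zeros_accumulate_at_def
proof (intro allI impI)
  fix e :: real
  assume "e > 0"
  then have "\<forall>\<^sub>F n in sequentially. \<exists>x. \<bar>x - - p\<bar> < e \<and> W a (- b) (- c) d n x = 0"
    using assms unfolding zeros_accumulate_at_def by blast
  then show "\<forall>\<^sub>F n in sequentially. \<exists>x. \<bar>x - p\<bar> < e \<and> W a b c d n x = 0"
  proof eventually_elim
    case (elim n)
    then obtain x where "\<bar>x + p\<bar> < e" and "W a (- b) (- c) d n (- (- x)) = 0"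
      by auto
    then show ?case
      unfolding W_reflect by (intro exI[of _ "- x"]) auto
  qed
qed

lemma continuous_sign_change_imp_zero:
  fixes f :: "real \<Rightarrow> real"
  assumes "x1 \<le> x2" and "f x1 * f x2 \<le> 0" and "continuous_on {x1..x2} f"
  shows "\<exists>x\<in>{x1..x2}. f x = 0"
proof (cases "f x1 \<le> 0")
  case True
  then have "0 \<le> f x2 \<or> f x1 = 0"
    using assms(2) by (auto simp: mult_le_0_iff)
  then show ?thesis
    using IVT'[of f x1 0 x2] True assms by force
next
  case False
  then have "f x2 \<le> 0"
    using assms(2) by (simp add: mult_le_0_iff)
  then show ?thesis
    using IVT2'[of f x2 0 x1] False assms by force
qed

text \<open>Left of a double characteristic root p the roots are complex conjugate, r e^(\<pm>it);
  the argument t decreases continuously to 0 as the point moves to p, so it takes every value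
  pi/N with N large.\<close>
lemma eventually_Chebyshev_node:
  fixes a b c d p q :: real
  assumes "q < p"
    and signs: "\<And>x. x \<in> {q..p} \<Longrightarrow> c * x + d < 0 \<and> a * x + b > 0"
    and complex_roots: "\<And>x. x \<in> {q..<p} \<Longrightarrow> (a * x + b) ^ 2 + 4 * (c * x + d) < 0"
    and double_root: "(a * p + b) ^ 2 + 4 * (c * p + d) = 0"
  shows "\<forall>\<^sub>F N in sequentially. N \<ge> 2 \<and> (\<exists>y\<in>{q..p}. \<exists>r>0.
      a * y + b = 2 * r * cos (pi / real N) \<and> c * y + d = - (r ^ 2))"
proof -
  define Q where "Q x = (a * x + b) / (2 * sqrt (- (c * x + d)))" for x
  have "(a * q + b) / 2 < sqrt (- (c * q + d))"
    using complex_roots[of q] \<open>q < p\<close> by (intro real_less_rsqrt) (simp add: power_divide)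
  then have "Q q < 1"
    using signs[of q] \<open>q < p\<close> by (simp add: Q_def)
  have "sqrt (- (c * p + d)) = (a * p + b) / 2"
    using signs[of p] \<open>q < p\<close> double_root by (intro real_sqrt_unique) (auto simp: power_divide)
  then have "Q p = 1"
    using signs[of p] \<open>q < p\<close> by (simp add: Q_def)
  have "sqrt (- (c * x + d)) > 0" if "x \<in> {q..p}" for x
    using signs[OF that] by simp
  then have "continuous_on {q..p} Q"
    unfolding Q_def by (intro continuous_intros) (metis less_irrefl mult_eq_0_iff zero_neq_numeral)
  have "(\<lambda>N. cos (pi / real N)) \<longlonglongrightarrow> cos 0"
    by (intro tendsto_cos lim_const_over_n)
  then have "\<forall>\<^sub>F N in sequentially. Q q < cos (pi / real N) \<and> N \<ge> 2"
    using \<open>Q q < 1\<close> eventually_ge_at_top by (auto intro: eventually_conj order_tendstoD(1))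
  then show ?thesis
  proof eventually_elim
    case (elim N)
    then obtain y where y: "y \<in> {q..p}" "Q y = cos (pi / real N)"
      using IVT'[OF _ _ _ \<open>continuous_on {q..p} Q\<close>, of "cos (pi / real N)"] \<open>Q p = 1\<close> \<open>q < p\<close>
      by (auto simp: less_imp_le)
    define r where "r = sqrt (- (c * y + d))"
    have "r > 0" and "c * y + d = - (r ^ 2)"
      using signs[OF y(1)] by (auto simp: r_def)
    moreover have "a * y + b = 2 * r * cos (pi / real N)"
      using y(2) \<open>r > 0\<close> by (simp add: Q_def r_def field_simps)
    ultimately show ?case
      using elim y(1) by blast
  qed
qed

text \<open>At the Chebyshev node W_N is negative, while W_N(p) > 0.\<close>
lemma zeros_accumulate_at_double_root_right_end:
  fixes a b c d p q :: real
  assumes pos: "\<And>n. W a b c d n p > 0" and "q < p"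
    and signs: "\<And>x. x \<in> {q..p} \<Longrightarrow> c * x + d < 0 \<and> a * x + b > 0"
    and complex_roots: "\<And>x. x \<in> {q..<p} \<Longrightarrow> (a * x + b) ^ 2 + 4 * (c * x + d) < 0"
    and double_root: "(a * p + b) ^ 2 + 4 * (c * p + d) = 0"
  shows "zeros_accumulate_at a b c d p"
  unfolding zeros_accumulate_at_def
proof (intro allI impI)
  fix e :: real
  assume "e > 0"
  define x1 where "x1 = max q (p - e / 2)"
  have x1: "q \<le> x1" "x1 < p" "p - x1 < e"
    using \<open>q < p\<close> \<open>e > 0\<close> by (auto simp: x1_def)
  have "\<forall>\<^sub>F N in sequentially. N \<ge> 2 \<and> (\<exists>y\<in>{x1..p}. \<exists>r>0.
      a * y + b = 2 * r * cos (pi / real N) \<and> c * y + d = - (r ^ 2))"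
    using x1 signs complex_roots by (intro eventually_Chebyshev_node double_root) auto
  then show "\<forall>\<^sub>F N in sequentially. \<exists>x. \<bar>x - p\<bar> < e \<and> W a b c d N x = 0"
  proof eventually_elim
    case (elim N)
    then obtain y r where y: "y \<in> {x1..p}" and "r > 0"
      and "a * y + b = 2 * r * cos (pi / real N)" and "c * y + d = - (r ^ 2)"
      by blast
    then have "W a b c d N y < 0"
      using W_neg_at_Chebyshev_node elim by blast
    then obtain z where "z \<in> {y..p}" "W a b c d N z = 0"
      using continuous_sign_change_imp_zero[of y p "W a b c d N", OF _ _ continuous_on_W] pos[of N] y
      by (metis atLeastAtMost_iff less_imp_le mult_neg_pos)
    then show ?case
      using x1 y by (intro exI[of _ z]) auto
  qed
qed

lemma zeros_accumulate_at_double_root_left_end: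
  fixes a b c d p q :: real
  assumes "\<And>n. (- 1) ^ n * W a b c d n p > 0" and "p < q"
    and "\<And>x. x \<in> {p..q} \<Longrightarrow> c * x + d < 0 \<and> a * x + b < 0"
    and "\<And>x. x \<in> {p<..q} \<Longrightarrow> (a * x + b) ^ 2 + 4 * (c * x + d) < 0"
    and "(a * p + b) ^ 2 + 4 * (c * p + d) = 0"
  shows "zeros_accumulate_at a b c d p"
proof (rule zeros_accumulate_at_reflect,
       rule zeros_accumulate_at_double_root_right_end[where q = "- q"])
  fix x
  assume "x \<in> {- q..- p}"
  then show "- c * x + d < 0 \<and> a * x + - b > 0"
    using assms(3)[of "- x"] by auto
next
  fix x
  assume "x \<in> {- q..<- p}"
  then show "(a * x + - b) ^ 2 + 4 * (- c * x + d) < 0"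
    using assms(4)[of "- x"] by (auto simp: power2_eq_square algebra_simps)
qed (use assms in \<open>simp_all add: W_reflect power2_eq_square algebra_simps\<close>)

section \<open>The quadratic g\<close>

definition g_poly :: "real \<Rightarrow> real \<Rightarrow> real \<Rightarrow> real \<Rightarrow> real \<Rightarrow> real" where
  "g_poly a b c d x = (1 - a) * x ^ 2 - (b + c) * x - d"

lemma g_poly_eq_0_iff: "g_poly a b c d x = 0 \<longleftrightarrow> x ^ 2 = (a * x + b) * x + (c * x + d)"
  by (auto simp: g_poly_def power2_eq_square algebra_simps)

lemma g_poly_disc: "4 * g_poly a b c d x = ((2 - a) * x - b) ^ 2 - ((a * x + b) ^ 2 + 4 * (c * x + d))"
  by (simp add: g_poly_def power2_eq_square algebra_simps)

lemma g_poly_at_double_root: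
  "(a * x + b) ^ 2 + 4 * (c * x + d) = 0 \<Longrightarrow> 4 * g_poly a b c d x = ((2 - a) * x - b) ^ 2"
  by (simp add: g_poly_disc)

lemma g_poly_diff: "g_poly a b c d x - g_poly a b c d p = (x - p) * ((1 - a) * (x + p) - (b + c))"
  by (simp add: g_poly_def power2_eq_square algebra_simps)

text \<open>At z = b/(2 - a) the square in g_poly_disc vanishes; there the signs of the
  discriminant and of g are those of F and -F.\<close>
lemma disc_at_z:
  assumes "(2 - a) * z = b"
  shows "(2 - a) ^ 2 * ((a * z + b) ^ 2 + 4 * (c * z + d)) = 4 * Fq a b c d"
proof -
  have "a * z + b = 2 * z"
    using assms by (simp add: algebra_simps)
  then show ?thesis
    unfolding Fq_def assms[symmetric] by (simp add: power2_eq_square algebra_simps)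
qed

lemma g_poly_at_z:
  assumes "(2 - a) * z = b"
  shows "(2 - a) ^ 2 * g_poly a b c d z = - Fq a b c d"
proof -
  have "4 * g_poly a b c d z = - ((a * z + b) ^ 2 + 4 * (c * z + d))"
    using g_poly_disc[of a b c d z] assms by simp
  then have "4 * ((2 - a) ^ 2 * g_poly a b c d z) = - ((2 - a) ^ 2 * ((a * z + b) ^ 2 + 4 * (c * z + d)))"
    by (metis mult.left_commute mult_minus_right)
  then show ?thesis
    using disc_at_z[OF assms, of c d] by linarith
qed

lemma Deltag_eq: "Deltag a b c d = Fq a b c d + DeltaD a b c d"
  by (simp add: Deltag_def Fq_def DeltaD_def xA_def power2_eq_square field_simps)

lemma Deltag_pos_of_gt_1:
  assumes "a > 1" and "d < 0"
  shows "Deltag a b c d > 0"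
proof -
  have "d * (1 - a) > 0"
    using assms by (simp add: mult_neg_neg)
  then show ?thesis
    unfolding Deltag_def using zero_le_power2[of "b + c"] by linarith
qed

lemma g_poly_roots:
  assumes "a \<noteq> 1" and "Deltag a b c d > 0"
  obtains r1 r2 where "xg_minus a b c d = complex_of_real r1" and "xg_plus a b c d = complex_of_real r2"
    and "r1 < r2" and "g_poly a b c d r1 = 0" and "g_poly a b c d r2 = 0"
    and "\<And>x. (1 - a) * g_poly a b c d x < 0 \<longleftrightarrow> r1 < x \<and> x < r2"
    and "\<And>x. (1 - a) * g_poly a b c d x \<le> 0 \<longleftrightarrow> r1 \<le> x \<and> x \<le> r2"
    and "2 * (1 - a) * r1 - (b + c) \<noteq> 0" and "2 * (1 - a) * r2 - (b + c) \<noteq> 0"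
proof -
  define k where "k = 1 - a"
  define C where "C = (b + c) / (2 * (1 - a))"
  define T where "T = sqrt (Deltag a b c d) / (2 * \<bar>1 - a\<bar>)"
  have "k \<noteq> 0"
    using assms(1) by (simp add: k_def)
  have "T > 0"
    using assms by (simp add: T_def)
  have kT: "k * T ^ 2 = ((b + c) ^ 2 + 4 * d * k) / (4 * k)"
    using assms \<open>k \<noteq> 0\<close>
    by (simp add: T_def k_def Deltag_def power_divide power_mult_distrib power2_eq_square)
  have kC: "k * (x - C) ^ 2 = k * x ^ 2 - (b + c) * x + (b + c) ^ 2 / (4 * k)" for x
    using \<open>k \<noteq> 0\<close> by (simp add: C_def k_def[symmetric] field_simps power2_eq_square)
  have "(1 - a) * (x - (C - T)) * (x - (C + T)) = k * (x - C) ^ 2 - k * T ^ 2" for x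
    by (simp add: k_def power2_eq_square algebra_simps)
  also have "\<dots> x = k * x ^ 2 - (b + c) * x + (b + c) ^ 2 / (4 * k) - ((b + c) ^ 2 + 4 * d * k) / (4 * k)" for x
    by (simp only: kT kC)
  also have "\<dots> x = g_poly a b c d x" for x
    using \<open>k \<noteq> 0\<close> by (simp add: g_poly_def k_def[symmetric] field_simps)
  finally have factor: "(1 - a) * g_poly a b c d x = (1 - a) ^ 2 * ((x - (C - T)) * (x - (C + T)))" for x
    by (metis (no_types, lifting) mult.assoc power2_eq_square)
  have "(1 - a) ^ 2 > 0"
    using \<open>k \<noteq> 0\<close> by (simp add: k_def)
  then have "(1 - a) * g_poly a b c d x < 0 \<longleftrightarrow> C - T < x \<and> x < C + T"
    and "(1 - a) * g_poly a b c d x \<le> 0 \<longleftrightarrow> C - T \<le> x \<and> x \<le> C + T" for x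
    unfolding factor using \<open>T > 0\<close>
    by (auto simp: mult_less_0_iff mult_le_0_iff zero_less_mult_iff zero_le_mult_iff)
  moreover have "g_poly a b c d (C - T) = 0" and "g_poly a b c d (C + T) = 0"
    using factor[of "C - T"] factor[of "C + T"] \<open>k \<noteq> 0\<close> by (simp_all add: k_def)
  moreover have "2 * (1 - a) * (C - T) - (b + c) = - 2 * k * T"
    and "2 * (1 - a) * (C + T) - (b + c) = 2 * k * T"
    using \<open>k \<noteq> 0\<close> by (simp_all add: C_def k_def field_simps)
  moreover have "xg_minus a b c d = complex_of_real (C - T)" and "xg_plus a b c d = complex_of_real (C + T)"
    using assms by (simp_all add: xg_minus_def xg_plus_def C_def T_def csqrt_of_real)
  ultimately show ?thesis
    using \<open>T > 0\<close> \<open>k \<noteq> 0\<close> by (intro that[of "C - T" "C + T"]) simp_all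
qed

section \<open>Accumulation of zeros at a simple zero of g\<close>

lemma W_dominant_root_sign:
  fixes l1 l2 x :: real
  assumes "l1 + l2 = a * x + b" and "l1 * l2 = - (c * x + d)"
    and "\<bar>l2\<bar> < \<bar>l1\<bar>" and "x \<noteq> l2"
  shows "\<forall>\<^sub>F n in sequentially. W a b c d n x * (l1 - l2) * ((x - l2) * l1 ^ n) > 0"
proof -
  have "l1 \<noteq> 0"
    using assms(3) by auto
  have "(\<lambda>n. (x - l2) ^ 2 - (x - l2) * (x - l1) * (l2 / l1) ^ n) \<longlonglongrightarrow> (x - l2) ^ 2 - (x - l2) * (x - l1) * 0"
    using assms(3) \<open>l1 \<noteq> 0\<close> by (intro tendsto_intros LIMSEQ_power_zero) (simp add: abs_divide)
  then have "\<forall>\<^sub>F n in sequentially. (x - l2) ^ 2 - (x - l2) * (x - l1) * (l2 / l1) ^ n > 0"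
    using assms(4) by (intro order_tendstoD(1)) auto
  then show ?thesis
  proof eventually_elim
    case (elim n)
    have "W a b c d n x * (l1 - l2) * ((x - l2) * l1 ^ n)
        = (l1 ^ n) ^ 2 * ((x - l2) ^ 2 - (x - l2) * (x - l1) * (l2 / l1) ^ n)"
      unfolding W_Binet[OF assms(1,2)] using \<open>l1 \<noteq> 0\<close>
      by (simp add: power_divide power2_eq_square field_simps)
    then show ?case
      using elim \<open>l1 \<noteq> 0\<close> by simp
  qed
qed

lemma W_opposite_signs_eventually:
  fixes x1 x2 l11 l21 l12 l22 :: real
  assumes "l11 + l21 = a * x1 + b" and "l11 * l21 = - (c * x1 + d)" and "\<bar>l21\<bar> < \<bar>l11\<bar>"
    and "l12 + l22 = a * x2 + b" and "l12 * l22 = - (c * x2 + d)" and "\<bar>l22\<bar> < \<bar>l12\<bar>"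
    and "l11 * l12 > 0" and "(l11 - l21) * (l12 - l22) > 0" and "(x1 - l21) * (x2 - l22) < 0"
  shows "\<forall>\<^sub>F n in sequentially. W a b c d n x1 * W a b c d n x2 < 0"
proof -
  have "x1 \<noteq> l21" and "x2 \<noteq> l22"
    using assms(9) by auto
  with W_dominant_root_sign[OF assms(1-3)] W_dominant_root_sign[OF assms(4-6)]
  have "\<forall>\<^sub>F n in sequentially. W a b c d n x1 * (l11 - l21) * ((x1 - l21) * l11 ^ n) > 0 \<and>
      W a b c d n x2 * (l12 - l22) * ((x2 - l22) * l12 ^ n) > 0"
    by (simp add: eventually_conj)
  have neg: "(l11 - l21) * (l12 - l22) * ((x1 - l21) * (x2 - l22)) * (l11 * l12) ^ n < 0" for n
    using mult_neg_pos[OF mult_pos_neg[OF assms(8,9)] zero_less_power[OF assms(7)]] .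
  show ?thesis
    using \<open>\<forall>\<^sub>F n in sequentially. _ \<and> _\<close>
  proof eventually_elim
    case (elim n)
    have "(W a b c d n x1 * W a b c d n x2) *
        ((l11 - l21) * (l12 - l22) * ((x1 - l21) * (x2 - l22)) * (l11 * l12) ^ n)
      = (W a b c d n x1 * (l11 - l21) * ((x1 - l21) * l11 ^ n)) *
        (W a b c d n x2 * (l12 - l22) * ((x2 - l22) * l12 ^ n))"
      by (simp add: power_mult_distrib ac_simps)
    also have "\<dots> > 0"
      using elim by (simp only: mult_pos_pos)
    finally show ?case
      using neg[of n] by (meson less_asym zero_less_mult_iff)
  qed
qed

definition char_root :: "real \<Rightarrow> real \<Rightarrow> real \<Rightarrow> real \<Rightarrow> real \<Rightarrow> real \<Rightarrow> real" where
  "char_root s a b c d x = (a * x + b + s * sqrt ((a * x + b) ^ 2 + 4 * (c * x + d))) / 2"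

lemma char_root_add: "char_root s a b c d x + char_root (- s) a b c d x = a * x + b"
  by (simp add: char_root_def field_simps)

lemma char_root_diff:
  "char_root s a b c d x - char_root (- s) a b c d x = s * sqrt ((a * x + b) ^ 2 + 4 * (c * x + d))"
  by (simp add: char_root_def field_simps)

lemma char_root_mult:
  assumes "\<bar>s\<bar> = 1" and "(a * x + b) ^ 2 + 4 * (c * x + d) \<ge> 0"
  shows "char_root s a b c d x * char_root (- s) a b c d x = - (c * x + d)"
proof -
  let ?D = "(a * x + b) ^ 2 + 4 * (c * x + d)"
  have "s ^ 2 = 1"
    using assms(1) by (metis abs_power2 power2_abs power_one)
  have "char_root s a b c d x * char_root (- s) a b c d x = ((a * x + b) ^ 2 - s ^ 2 * sqrt ?D ^ 2) / 4"
    by (simp add: char_root_def power2_eq_square field_simps)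
  also have "\<dots> = - (c * x + d)"
    using assms(2) \<open>s ^ 2 = 1\<close> by simp
  finally show ?thesis .
qed

lemma char_root_factor:
  assumes "\<bar>s\<bar> = 1" and "(a * x + b) ^ 2 + 4 * (c * x + d) \<ge> 0"
  shows "(x - char_root s a b c d x) * (x - char_root (- s) a b c d x) = g_poly a b c d x"
proof -
  have "(x - char_root s a b c d x) * (x - char_root (- s) a b c d x)
      = x ^ 2 - (char_root s a b c d x + char_root (- s) a b c d x) * x
        + char_root s a b c d x * char_root (- s) a b c d x"
    by (simp add: power2_eq_square algebra_simps)
  then show ?thesis
    unfolding char_root_add char_root_mult[OF assms] by (simp add: g_poly_def power2_eq_square algebra_simps)
qed

lemma char_root_at_g_root:
  fixes a b c d p :: real
  assumes "g_poly a b c d p = 0" and "\<bar>p\<bar> < \<bar>a * p + b - p\<bar>"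
  defines "s \<equiv> sgn (a * p + b - p)"
  shows "char_root s a b c d p = a * p + b - p" and "char_root (- s) a b c d p = p"
    and "s * (a * p + b - 2 * p) > 0"
proof -
  have "(a * p + b) ^ 2 + 4 * (c * p + d) = (a * p + b - 2 * p) ^ 2"
    using assms(1) by (simp add: g_poly_def power2_eq_square algebra_simps)
  moreover have "s * \<bar>a * p + b - 2 * p\<bar> = a * p + b - 2 * p"
    using assms(2) unfolding s_def by (cases "a * p + b - p > 0") auto
  ultimately have "s * sqrt ((a * p + b) ^ 2 + 4 * (c * p + d)) = a * p + b - 2 * p"
    by simp
  then show "char_root s a b c d p = a * p + b - p" and "char_root (- s) a b c d p = p"
    by (simp_all add: char_root_def)
  show "s * (a * p + b - 2 * p) > 0"
    using assms(2) unfolding s_def by (cases "a * p + b - p > 0") auto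
qed

text \<open>x minus the second root is g(x) / (x minus the first root), and g(x) is
  (x - p) times the difference quotient of g.\<close>
lemma char_root_offset_sign:
  fixes a b c d p x :: real
  assumes "g_poly a b c d p = 0" and "\<bar>s\<bar> = 1" and "(a * x + b) ^ 2 + 4 * (c * x + d) > 0"
    and "(x - char_root s a b c d x) * ((1 - a) * (x + p) - (b + c)) * \<kappa> > 0" and "x \<noteq> p"
  shows "(x - char_root (- s) a b c d x) * (x - p) * \<kappa> > 0"
proof -
  let ?l1 = "char_root s a b c d x" and ?l2 = "char_root (- s) a b c d x"
  let ?h = "(1 - a) * (x + p) - (b + c)"
  have "(x - ?l1) * (x - ?l2) = (x - p) * ?h"
    using char_root_factor[OF assms(2), of a x b c d] g_poly_diff[of a b c d x p] assms(1,3) by simp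
  then have "((x - ?l2) * (x - p) * \<kappa>) * ((x - ?l1) * ?h * \<kappa>) = ((x - p) * ?h * \<kappa>) ^ 2"
    by (simp add: power2_eq_square ac_simps)
  moreover have "(x - p) * ?h * \<kappa> \<noteq> 0"
    using assms(4,5) by auto
  ultimately have "((x - ?l2) * (x - p) * \<kappa>) * ((x - ?l1) * ?h * \<kappa>) > 0"
    by simp
  then show ?thesis
    using assms(4) by (rule zero_less_mult_pos2)
qed

text \<open>char_root s continues the dominant root a p + b - p, and char_root (- s) continues p.\<close>
lemma eventually_dominated_char_roots:
  fixes a b c d p :: real
  assumes root: "g_poly a b c d p = 0"
    and dominant: "\<bar>p\<bar> < \<bar>a * p + b - p\<bar>"
    and simple: "2 * (1 - a) * p - (b + c) \<noteq> 0"
  defines "s \<equiv> sgn (a * p + b - p)"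
    and "\<kappa> \<equiv> (2 * p - (a * p + b)) * (2 * (1 - a) * p - (b + c))"
  shows "\<forall>\<^sub>F x in at p. (a * x + b) ^ 2 + 4 * (c * x + d) > 0
    \<and> \<bar>char_root (- s) a b c d x\<bar> < \<bar>char_root s a b c d x\<bar>
    \<and> char_root s a b c d x * s > 0
    \<and> (x - char_root (- s) a b c d x) * (x - p) * \<kappa> > 0"
proof -
  let ?D = "\<lambda>x. (a * x + b) ^ 2 + 4 * (c * x + d)"
  let ?l1 = "char_root s a b c d" and ?l2 = "char_root (- s) a b c d"
  define h where "h x = (1 - a) * (x + p) - (b + c)" for x
  note at_p = char_root_at_g_root[OF root dominant, folded s_def]
  have "\<bar>s\<bar> = 1"
    using dominant by (auto simp: s_def sgn_if)
  have lim_D: "(?D \<longlongrightarrow> ?D p) (at p)" and lim_l1: "(?l1 \<longlongrightarrow> ?l1 p) (at p)"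
    and lim_l2: "(?l2 \<longlongrightarrow> ?l2 p) (at p)"
    unfolding char_root_def by (auto intro!: tendsto_eq_intros)
  have "?D p = (a * p + b - 2 * p) ^ 2"
    using root by (simp add: g_poly_def power2_eq_square algebra_simps)
  then have ev_D: "\<forall>\<^sub>F x in at p. ?D x > 0"
    using at_p(3) by (intro order_tendstoD(1)[OF lim_D]) auto
  have "\<bar>?l1 p\<bar> - \<bar>?l2 p\<bar> > 0"
    using at_p dominant by simp
  then have ev_dominated: "\<forall>\<^sub>F x in at p. \<bar>?l1 x\<bar> - \<bar>?l2 x\<bar> > 0"
    by (rule order_tendstoD(1)[OF tendsto_diff[OF tendsto_rabs[OF lim_l1] tendsto_rabs[OF lim_l2]]])
  have "?l1 p * s > 0"
    using at_p dominant by (auto simp: s_def sgn_if)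
  then have ev_sign: "\<forall>\<^sub>F x in at p. ?l1 x * s > 0"
    by (rule order_tendstoD(1)[OF tendsto_mult[OF lim_l1 tendsto_const]])
  have "(p - ?l1 p) * h p = \<kappa>"
    unfolding at_p(1) \<kappa>_def h_def by (simp add: algebra_simps)
  moreover have "\<kappa> \<noteq> 0"
    using at_p(3) simple unfolding \<kappa>_def by auto
  ultimately have "(p - ?l1 p) * h p * \<kappa> > 0"
    by (auto simp: zero_less_mult_iff linorder_neq_iff)
  moreover have "((\<lambda>x. (x - ?l1 x) * h x * \<kappa>) \<longlongrightarrow> (p - ?l1 p) * h p * \<kappa>) (at p)"
    unfolding h_def by (intro tendsto_intros lim_l1)
  ultimately have ev_change: "\<forall>\<^sub>F x in at p. (x - ?l1 x) * h x * \<kappa> > 0"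
    by (simp add: order_tendstoD(1))
  with ev_D ev_dominated ev_sign eventually_neq_at_within[of p p UNIV] show ?thesis
  proof eventually_elim
    case (elim x)
    then show ?case
      using char_root_offset_sign[OF root \<open>\<bar>s\<bar> = 1\<close>, of x \<kappa>] by (simp add: h_def)
  qed
qed

text \<open>Both characteristic roots move continuously, so at p - k and p + k the dominant
  root has the same sign while x minus the dominated root has opposite signs.\<close>
lemma eventually_W_sign_change_at_simple_g_root:
  fixes a b c d p :: real
  assumes root: "g_poly a b c d p = 0"
    and dominant: "\<bar>p\<bar> < \<bar>a * p + b - p\<bar>"
    and simple: "2 * (1 - a) * p - (b + c) \<noteq> 0"
  obtains \<delta> where "\<delta> > 0" and
    "\<And>k. 0 < k \<Longrightarrow> k < \<delta> \<Longrightarrow> \<forall>\<^sub>F n in sequentially. W a b c d n (p - k) * W a b c d n (p + k) < 0"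
proof -
  define s where "s = sgn (a * p + b - p)"
  define \<kappa> where "\<kappa> = (2 * p - (a * p + b)) * (2 * (1 - a) * p - (b + c))"
  let ?D = "\<lambda>x. (a * x + b) ^ 2 + 4 * (c * x + d)"
  let ?l1 = "char_root s a b c d" and ?l2 = "char_root (- s) a b c d"
  have "\<bar>s\<bar> = 1"
    using dominant by (auto simp: s_def sgn_if)
  obtain \<delta> where "\<delta> > 0" and near: "\<And>x. x \<noteq> p \<Longrightarrow> dist x p < \<delta> \<Longrightarrow>
      ?D x > 0 \<and> \<bar>?l2 x\<bar> < \<bar>?l1 x\<bar> \<and> ?l1 x * s > 0 \<and> (x - ?l2 x) * (x - p) * \<kappa> > 0"
    using eventually_dominated_char_roots[OF root dominant simple, folded s_def \<kappa>_def]
    unfolding eventually_at by blast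
  have "\<forall>\<^sub>F n in sequentially. W a b c d n (p - k) * W a b c d n (p + k) < 0"
    if "0 < k" "k < \<delta>" for k
  proof -
    have near1: "?D (p - k) > 0 \<and> \<bar>?l2 (p - k)\<bar> < \<bar>?l1 (p - k)\<bar> \<and> ?l1 (p - k) * s > 0
          \<and> (p - k - ?l2 (p - k)) * (- k) * \<kappa> > 0"
      and near2: "?D (p + k) > 0 \<and> \<bar>?l2 (p + k)\<bar> < \<bar>?l1 (p + k)\<bar> \<and> ?l1 (p + k) * s > 0
          \<and> (p + k - ?l2 (p + k)) * k * \<kappa> > 0"
      using near[of "p - k"] near[of "p + k"] that by (auto simp: dist_real_def)
    have same_sign: "?l1 (p - k) * ?l1 (p + k) > 0"
      using near1 near2 mult_pos_pos[of "?l1 (p - k) * s" "?l1 (p + k) * s"] \<open>\<bar>s\<bar> = 1\<close>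
      by (auto simp: abs_if algebra_simps split: if_splits)
    have "(?l1 (p - k) - ?l2 (p - k)) * (?l1 (p + k) - ?l2 (p + k))
        = (s * s) * (sqrt (?D (p - k)) * sqrt (?D (p + k)))"
      unfolding char_root_diff by (simp add: ac_simps)
    then have same_order: "(?l1 (p - k) - ?l2 (p - k)) * (?l1 (p + k) - ?l2 (p + k)) > 0"
      using near1 near2 abs_mult_self_eq[of s] \<open>\<bar>s\<bar> = 1\<close> by simp
    have sign_change: "(p - k - ?l2 (p - k)) * (p + k - ?l2 (p + k)) < 0"
      using near1 near2 \<open>k > 0\<close> by (auto simp: zero_less_mult_iff mult_less_0_iff)
    have "?l1 x * ?l2 x = - (c * x + d)" if "?D x > 0" for x
      using that by (intro char_root_mult[OF \<open>\<bar>s\<bar> = 1\<close>]) simp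
    then show ?thesis
      using near1 near2 by (intro W_opposite_signs_eventually[OF char_root_add _ _ char_root_add _ _
            same_sign same_order sign_change]) simp_all
  qed
  with \<open>\<delta> > 0\<close> show ?thesis
    using that by blast
qed

lemma zeros_accumulate_at_simple_g_root:
  fixes a b c d p :: real
  assumes "g_poly a b c d p = 0" and "\<bar>p\<bar> < \<bar>a * p + b - p\<bar>"
    and "2 * (1 - a) * p - (b + c) \<noteq> 0"
  shows "zeros_accumulate_at a b c d p"
  unfolding zeros_accumulate_at_def
proof (intro allI impI)
  fix e :: real
  assume "e > 0"
  obtain \<delta> where "\<delta> > 0" and sign_change:
    "\<And>k. 0 < k \<Longrightarrow> k < \<delta> \<Longrightarrow> \<forall>\<^sub>F n in sequentially. W a b c d n (p - k) * W a b c d n (p + k) < 0"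
    using eventually_W_sign_change_at_simple_g_root[OF assms] by blast
  define k where "k = min e \<delta> / 2"
  have "0 < k" "k < e" "k < \<delta>"
    using \<open>e > 0\<close> \<open>\<delta> > 0\<close> by (auto simp: k_def)
  with sign_change have "\<forall>\<^sub>F n in sequentially. W a b c d n (p - k) * W a b c d n (p + k) < 0"
    by blast
  then show "\<forall>\<^sub>F n in sequentially. \<exists>x. \<bar>x - p\<bar> < e \<and> W a b c d n x = 0"
  proof eventually_elim
    case (elim n)
    then have "\<exists>z\<in>{p - k..p + k}. W a b c d n z = 0"
      using \<open>k > 0\<close> by (intro continuous_sign_change_imp_zero continuous_on_W) auto
    then show ?case
      using \<open>k < e\<close> by force
  qed
qed

section \<open>The endpoints u and v\<close>

definition left_limit_point :: "real \<Rightarrow> real \<Rightarrow> real \<Rightarrow> real \<Rightarrow> real \<Rightarrow> bool" where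
  "left_limit_point a b c d u \<longleftrightarrow> u \<le> xD_minus a b c d \<and> u < 0
     \<and> (\<forall>n. (- 1) ^ n * W a b c d n u > 0) \<and> limit_of_zeros a b c d (complex_of_real u)"

definition right_limit_point :: "real \<Rightarrow> real \<Rightarrow> real \<Rightarrow> real \<Rightarrow> real \<Rightarrow> bool" where
  "right_limit_point a b c d v \<longleftrightarrow> xD_plus a b c d \<le> v \<and> v < xB c d \<and> 0 < v
     \<and> (\<forall>n. W a b c d n v > 0) \<and> limit_of_zeros a b c d (complex_of_real v)"

text \<open>At z = u the characteristic roots are u and a u + b - u < u < 0, so u is dominated.\<close>
lemma g_root_left_limit_point:
  assumes "g_poly a b c d u = 0" and "u < 0" and "u \<le> xD_minus a b c d" and "b < (2 - a) * u"
    and "2 * (1 - a) * u - (b + c) \<noteq> 0"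
  shows "left_limit_point a b c d u"
proof -
  have root: "u ^ 2 = (a * u + b) * u + (c * u + d)"
    using assms(1) by (simp add: g_poly_eq_0_iff)
  have "zeros_accumulate_at a b c d u"
    using assms by (intro zeros_accumulate_at_simple_g_root) (auto simp: algebra_simps)
  then show ?thesis
    using assms(2,3) unfolding left_limit_point_def
    by (simp add: W_char_root[OF root] power_minus[symmetric] limit_of_zeros_of_real)
qed

lemma g_root_right_limit_point:
  assumes "g_poly a b c d v = 0" and "xD_plus a b c d \<le> v" and "v < xB c d" and "v > 0"
    and "(2 - a) * v < b" and "2 * (1 - a) * v - (b + c) \<noteq> 0"
  shows "right_limit_point a b c d v"
proof -
  have root: "v ^ 2 = (a * v + b) * v + (c * v + d)"
    using assms(1) by (simp add: g_poly_eq_0_iff)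
  have "zeros_accumulate_at a b c d v"
    using assms by (intro zeros_accumulate_at_simple_g_root) (auto simp: algebra_simps)
  then show ?thesis
    using assms(2-4) unfolding right_limit_point_def
    by (simp add: W_char_root[OF root] limit_of_zeros_of_real)
qed

context
  fixes a b c d :: real
  assumes a: "a > 0" and c: "c > 0" and b: "b < 0" and d: "d < 0"
    and xA_less_xB: "xA a b < xB c d"
begin

lemma xA_pos: "xA a b > 0"
  using a b by (simp add: xA_def divide_neg_pos)

lemma A_eq_mult: "a * x + b = a * (x - xA a b)"
  using a by (simp add: xA_def algebra_simps)

lemma A_pos_iff: "a * x + b > 0 \<longleftrightarrow> xA a b < x"
  using a by (simp add: A_eq_mult zero_less_mult_iff)

lemma A_neg_iff: "a * x + b < 0 \<longleftrightarrow> x < xA a b"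
  using a by (simp add: A_eq_mult mult_less_0_iff)

lemma B_neg: "x < xB c d \<Longrightarrow> c * x + d < 0"
  using c by (simp add: xB_def field_simps)

lemma DeltaD_gt_c_square: "DeltaD a b c d > c ^ 2"
proof -
  have "a ^ 2 * (c * xA a b + d) < 0"
    using B_neg[OF xA_less_xB] a by (simp add: mult_pos_neg)
  then show ?thesis
    unfolding DeltaD_def by linarith
qed

lemma xD_minus_eq: "xD_minus a b c d = xA a b - 2 * (c + sqrt (DeltaD a b c d)) / a ^ 2"
  using a by (simp add: xD_minus_def field_simps)

lemma xD_plus_eq: "xD_plus a b c d = xA a b + 2 * (sqrt (DeltaD a b c d) - c) / a ^ 2"
  using a by (simp add: xD_plus_def field_simps)

lemma c_less_sqrt_DeltaD: "c < sqrt (DeltaD a b c d)"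
  using real_sqrt_less_mono[OF DeltaD_gt_c_square] c by simp

lemma xD_minus_less_xA: "xD_minus a b c d < xA a b"
  using a c c_less_sqrt_DeltaD by (simp add: xD_minus_eq)

lemma xA_less_xD_plus: "xA a b < xD_plus a b c d"
  using a c_less_sqrt_DeltaD by (simp add: xD_plus_eq)

lemma disc_factor:
  "(a * x + b) ^ 2 + 4 * (c * x + d) = a ^ 2 * (x - xD_minus a b c d) * (x - xD_plus a b c d)"
proof -
  define t where "t = xA a b"
  define S where "S = sqrt (DeltaD a b c d)"
  have "DeltaD a b c d \<ge> 0"
    using DeltaD_gt_c_square zero_le_power2[of c] by linarith
  then have S2: "S ^ 2 = c ^ 2 - a ^ 2 * (c * t + d)"
    by (simp add: S_def DeltaD_def t_def)
  have bt: "b = - a * t"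
    using a by (simp add: t_def xA_def)
  have "a ^ 2 * (x - xD_minus a b c d) * (x - xD_plus a b c d)
      = a ^ 2 * (x - t) ^ 2 + 4 * c * (x - t) + 4 * (c ^ 2 - S ^ 2) / a ^ 2"
    unfolding xD_minus_eq xD_plus_eq t_def[symmetric] S_def[symmetric]
    using a by (simp add: field_simps power2_eq_square)
  also have "\<dots> = (a * x + b) ^ 2 + 4 * (c * x + d)"
    unfolding S2 bt using a by (simp add: field_simps power2_eq_square)
  finally show ?thesis
    by simp
qed

lemma disc_xD_minus: "(a * xD_minus a b c d + b) ^ 2 + 4 * (c * xD_minus a b c d + d) = 0"
  unfolding disc_factor by simp

lemma disc_xD_plus: "(a * xD_plus a b c d + b) ^ 2 + 4 * (c * xD_plus a b c d + d) = 0"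
  unfolding disc_factor by simp

lemma disc_neg_iff: "(a * x + b) ^ 2 + 4 * (c * x + d) < 0 \<longleftrightarrow> xD_minus a b c d < x \<and> x < xD_plus a b c d"
  unfolding disc_factor using xD_minus_less_xA xA_less_xD_plus a
  by (auto simp: mult_less_0_iff zero_less_mult_iff)

lemma disc_nonpos_iff: "(a * x + b) ^ 2 + 4 * (c * x + d) \<le> 0 \<longleftrightarrow> xD_minus a b c d \<le> x \<and> x \<le> xD_plus a b c d"
  unfolding disc_factor using xD_minus_less_xA xA_less_xD_plus a
  by (auto simp: mult_le_0_iff zero_le_mult_iff)

lemma xD_plus_less_xB: "xD_plus a b c d < xB c d"
proof -
  have "c * xB c d + d = 0"
    using c by (simp add: xB_def)
  moreover have "a * xB c d + b > 0"
    using A_pos_iff xA_less_xB by blast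
  ultimately have "\<not> (a * xB c d + b) ^ 2 + 4 * (c * xB c d + d) \<le> 0"
    by simp
  then show ?thesis
    using disc_nonpos_iff xD_minus_less_xA xA_less_xB by fastforce
qed

text \<open>At a zero p of the discriminant the characteristic root (a p + b)/2 is double, and it
  lies between 0 and p exactly when the hypothesis on 2 - a holds.\<close>
lemma right_limit_point_xD_plus:
  assumes "b \<le> (2 - a) * xD_plus a b c d"
  shows "right_limit_point a b c d (xD_plus a b c d)"
proof -
  let ?p = "xD_plus a b c d"
  note double_root = disc_xD_plus
  have "0 < (a * ?p + b) / 2"
    using A_pos_iff xA_less_xD_plus by simp
  moreover have "((a * ?p + b) / 2) ^ 2 = - (c * ?p + d)"
    using double_root by (simp add: power_divide)
  moreover have "(a * ?p + b) / 2 \<le> ?p"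
    using assms by (simp add: algebra_simps)
  ultimately have pos: "W a b c d n ?p > 0" for n
    by (intro W_pos_at_double_root[of "(a * ?p + b) / 2"]) simp_all
  define q where "q = (xA a b + ?p) / 2"
  have "xA a b < q" "q < ?p"
    using xA_less_xD_plus by (simp_all add: q_def)
  have "zeros_accumulate_at a b c d ?p"
  proof (rule zeros_accumulate_at_double_root_right_end[OF pos \<open>q < ?p\<close> _ _ double_root])
    fix x
    assume "x \<in> {q..?p}"
    then show "c * x + d < 0 \<and> a * x + b > 0"
      using \<open>xA a b < q\<close> xD_plus_less_xB by (auto simp: A_pos_iff intro: B_neg)
  next
    fix x
    assume "x \<in> {q..<?p}"
    then show "(a * x + b) ^ 2 + 4 * (c * x + d) < 0"
      using \<open>xA a b < q\<close> xD_minus_less_xA unfolding disc_neg_iff by auto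
  qed
  then show ?thesis
    unfolding right_limit_point_def
    using pos xD_plus_less_xB xA_pos xA_less_xD_plus by (simp add: limit_of_zeros_of_real)
qed

lemma left_limit_point_xD_minus:
  assumes "a < 2" and "(2 - a) * xD_minus a b c d \<le> b"
  shows "left_limit_point a b c d (xD_minus a b c d)"
proof -
  let ?p = "xD_minus a b c d"
  note double_root = disc_xD_minus
  have "(a * ?p + b) / 2 < 0"
    using A_neg_iff xD_minus_less_xA by simp
  moreover have "((a * ?p + b) / 2) ^ 2 = - (c * ?p + d)"
    using double_root by (simp add: power_divide)
  moreover have "?p \<le> (a * ?p + b) / 2"
    using assms by (simp add: algebra_simps)
  ultimately have pos: "(- 1) ^ n * W a b c d n ?p > 0" for n
    by (intro W_alternating_at_double_root[of "(a * ?p + b) / 2"]) simp_all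
  define q where "q = (?p + xA a b) / 2"
  have "?p < q" "q < xA a b"
    using xD_minus_less_xA by (simp_all add: q_def)
  have "(2 - a) * ?p < 0"
    using assms(2) b by linarith
  then have "?p < 0"
    using assms(1) by (simp add: mult_less_0_iff)
  have "zeros_accumulate_at a b c d ?p"
  proof (rule zeros_accumulate_at_double_root_left_end[OF pos \<open>?p < q\<close> _ _ double_root])
    fix x
    assume "x \<in> {?p..q}"
    then show "c * x + d < 0 \<and> a * x + b < 0"
      using \<open>q < xA a b\<close> xA_less_xB by (auto simp: A_neg_iff intro: B_neg)
  next
    fix x
    assume "x \<in> {?p<..q}"
    then show "(a * x + b) ^ 2 + 4 * (c * x + d) < 0"
      using \<open>q < xA a b\<close> xA_less_xD_plus unfolding disc_neg_iff by auto
  qed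
  then show ?thesis
    unfolding left_limit_point_def using pos \<open>?p < 0\<close> by (simp add: limit_of_zeros_of_real)
qed

lemma b_le_mult_xD_plus:
  assumes "\<not> (a > 2 \<and> Fq a b c d < 0)"
  shows "b \<le> (2 - a) * xD_plus a b c d"
proof (cases "a \<le> 2")
  case True
  then have "0 \<le> (2 - a) * xD_plus a b c d"
    using xA_pos xA_less_xD_plus by simp
  then show ?thesis
    using b by linarith
next
  case False
  define z where "z = b / (2 - a)"
  have z: "(2 - a) * z = b"
    using False by (simp add: z_def)
  have "0 \<le> (2 - a) ^ 2 * ((a * z + b) ^ 2 + 4 * (c * z + d))"
    unfolding disc_at_z[OF z] using assms False by simp
  then have "\<not> (a * z + b) ^ 2 + 4 * (c * z + d) < 0"
    using False by (simp add: zero_le_mult_iff)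
  moreover have "z > 0"
    using False b by (simp add: z_def divide_neg_neg)
  then have "xA a b < z"
    using z unfolding A_pos_iff[symmetric] by (simp add: algebra_simps)
  ultimately have "xD_plus a b c d \<le> z"
    unfolding disc_neg_iff using xD_minus_less_xA by auto
  then show ?thesis
    using z False mult_left_mono_neg[of "xD_plus a b c d" z "2 - a"] by simp
qed

lemma g_poly_xD_plus_pos:
  assumes "(2 - a) * xD_plus a b c d \<noteq> b"
  shows "g_poly a b c d (xD_plus a b c d) > 0"
proof -
  have "4 * g_poly a b c d (xD_plus a b c d) = ((2 - a) * xD_plus a b c d - b) ^ 2"
    by (rule g_poly_at_double_root[OF disc_xD_plus])
  moreover have "((2 - a) * xD_plus a b c d - b) ^ 2 > 0"
    using assms by simp
  ultimately show ?thesis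
    by linarith
qed

lemma g_poly_xB_neg:
  assumes "(2 - a) * xB c d < b"
  shows "g_poly a b c d (xB c d) < 0"
proof -
  have "g_poly a b c d (xB c d) = xB c d * (xB c d - (a * xB c d + b)) - (c * xB c d + d)"
    by (simp add: g_poly_def power2_eq_square algebra_simps)
  moreover have "c * xB c d + d = 0"
    using c by (simp add: xB_def)
  moreover have "xB c d - (a * xB c d + b) < 0"
    using assms xA_pos xA_less_xB by (simp add: algebra_simps)
  ultimately show ?thesis
    using xA_pos xA_less_xB by (simp add: mult_pos_neg)
qed

lemma right_limit_point_xg_plus:
  assumes "a > 2" and "Fq a b c d < 0"
  obtains v where "xg_plus a b c d = complex_of_real v" and "right_limit_point a b c d v"
proof -
  have "Deltag a b c d > 0"
    using assms(1) d by (simp add: Deltag_pos_of_gt_1)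
  moreover have "a \<noteq> 1"
    using assms(1) by simp
  ultimately obtain r1 r2 where roots: "xg_minus a b c d = complex_of_real r1"
    "xg_plus a b c d = complex_of_real r2" "r1 < r2" "g_poly a b c d r1 = 0" "g_poly a b c d r2 = 0"
    "\<And>x. (1 - a) * g_poly a b c d x < 0 \<longleftrightarrow> r1 < x \<and> x < r2"
    "\<And>x. (1 - a) * g_poly a b c d x \<le> 0 \<longleftrightarrow> r1 \<le> x \<and> x \<le> r2"
    "2 * (1 - a) * r1 - (b + c) \<noteq> 0" "2 * (1 - a) * r2 - (b + c) \<noteq> 0"
    using g_poly_roots by blast
  define z where "z = b / (2 - a)"
  have z: "(2 - a) * z = b"
    using assms(1) by (simp add: z_def)
  have "(2 - a) ^ 2 * ((a * z + b) ^ 2 + 4 * (c * z + d)) < 0"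
    unfolding disc_at_z[OF z] using assms(2) by simp
  then have "(a * z + b) ^ 2 + 4 * (c * z + d) < 0"
    by (simp add: mult_less_0_iff)
  then have "z < xD_plus a b c d"
    unfolding disc_neg_iff by simp
  then have "(2 - a) * xD_plus a b c d < b"
    using z assms(1) by (metis diff_less_0_iff_less mult_strict_left_mono_neg)
  then have "(1 - a) * g_poly a b c d (xD_plus a b c d) < 0"
    using g_poly_xD_plus_pos assms(1) by (simp add: mult_neg_pos)
  then have r1: "r1 < xD_plus a b c d" and r2: "xD_plus a b c d < r2"
    using roots(6) by auto
  have "(2 - a) * xB c d < b"
    using z xD_plus_less_xB \<open>z < xD_plus a b c d\<close> assms(1)
    by (metis diff_less_0_iff_less mult_strict_left_mono_neg order.strict_trans)
  then have "g_poly a b c d (xB c d) < 0"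
    by (rule g_poly_xB_neg)
  then have "(1 - a) * g_poly a b c d (xB c d) > 0"
    using assms(1) by (intro mult_neg_neg) auto
  then have "\<not> (1 - a) * g_poly a b c d (xB c d) \<le> 0"
    by linarith
  then have "r2 < xB c d"
    using roots(7) r1 xD_plus_less_xB by auto
  moreover have "(2 - a) * r2 < b"
    using z r2 \<open>z < xD_plus a b c d\<close> assms(1)
    by (metis diff_less_0_iff_less mult_strict_left_mono_neg order.strict_trans)
  moreover have "0 < r2"
    using r2 xA_pos xA_less_xD_plus by linarith
  ultimately show ?thesis
    using roots r2 by (intro that[OF roots(2) g_root_right_limit_point]) auto
qed

lemma right_limit_point_snd_uv: "\<exists>v. snd (uv a b c d) = complex_of_real v \<and> right_limit_point a b c d v"
proof (cases "a > 2 \<and> Fq a b c d < 0")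
  case True
  then obtain v where "xg_plus a b c d = complex_of_real v" and "right_limit_point a b c d v"
    using right_limit_point_xg_plus by blast
  then show ?thesis
    using True by (intro exI[of _ v]) (simp add: uv_def)
next
  case False
  then show ?thesis
    using right_limit_point_xD_plus[OF b_le_mult_xD_plus[OF False]]
    by (intro exI[of _ "xD_plus a b c d"]) (auto simp: uv_def)
qed

lemma mult_xD_minus_le_b:
  assumes "a < 2" and "Fq a b c d \<le> 0"
  shows "(2 - a) * xD_minus a b c d \<le> b"
proof -
  define z where "z = b / (2 - a)"
  have z: "(2 - a) * z = b"
    using assms(1) by (simp add: z_def)
  have "(2 - a) ^ 2 * ((a * z + b) ^ 2 + 4 * (c * z + d)) \<le> 0"
    unfolding disc_at_z[OF z] using assms(2) by simp
  then have "(a * z + b) ^ 2 + 4 * (c * z + d) \<le> 0"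
    using assms(1) by (simp add: mult_le_0_iff)
  then have "xD_minus a b c d \<le> z"
    unfolding disc_nonpos_iff by simp
  then show ?thesis
    using z assms(1) by (metis diff_gt_0_iff_gt mult_left_mono less_imp_le)
qed

lemma g_poly_zero_pos: "g_poly a b c d 0 > 0"
  using d by (simp add: g_poly_def)

lemma left_limit_point_xg_plus:
  assumes "a < 1" and "Fq a b c d > 0"
  obtains u where "xg_plus a b c d = complex_of_real u" and "left_limit_point a b c d u"
proof -
  have "Deltag a b c d > 0"
    unfolding Deltag_eq using assms(2) DeltaD_gt_c_square zero_le_power2[of c] by linarith
  moreover have "a \<noteq> 1"
    using assms(1) by simp
  ultimately obtain r1 r2 where roots: "xg_minus a b c d = complex_of_real r1"
    "xg_plus a b c d = complex_of_real r2" "r1 < r2" "g_poly a b c d r1 = 0" "g_poly a b c d r2 = 0"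
    "\<And>x. (1 - a) * g_poly a b c d x < 0 \<longleftrightarrow> r1 < x \<and> x < r2"
    "\<And>x. (1 - a) * g_poly a b c d x \<le> 0 \<longleftrightarrow> r1 \<le> x \<and> x \<le> r2"
    "2 * (1 - a) * r1 - (b + c) \<noteq> 0" "2 * (1 - a) * r2 - (b + c) \<noteq> 0"
    using g_poly_roots by blast
  define z where "z = b / (2 - a)"
  have z: "(2 - a) * z = b" and "z < 0"
    using assms(1) b by (simp_all add: z_def divide_neg_pos)
  have "(2 - a) ^ 2 * g_poly a b c d z < 0"
    unfolding g_poly_at_z[OF z] using assms(2) by simp
  then have "(1 - a) * g_poly a b c d z < 0"
    using assms(1) by (simp add: mult_less_0_iff)
  then have z_between: "r1 < z" "z < r2"
    using roots(6) by auto
  have "(2 - a) ^ 2 * ((a * z + b) ^ 2 + 4 * (c * z + d)) > 0"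
    unfolding disc_at_z[OF z] using assms(2) by simp
  then have "\<not> (a * z + b) ^ 2 + 4 * (c * z + d) \<le> 0"
    by (auto simp: zero_less_mult_iff)
  then have "z < xD_minus a b c d"
    unfolding disc_nonpos_iff using \<open>z < 0\<close> xA_pos xA_less_xD_plus by auto
  then have "b < (2 - a) * xD_minus a b c d"
    using z assms(1) by (metis diff_gt_0_iff_gt mult_strict_left_mono one_less_numeral_iff order.strict_trans
        semiring_norm(76))
  then have "4 * g_poly a b c d (xD_minus a b c d) > 0"
    unfolding g_poly_at_double_root[OF disc_xD_minus] by simp
  then have "(1 - a) * g_poly a b c d (xD_minus a b c d) > 0"
    using assms(1) by simp
  then have "\<not> (1 - a) * g_poly a b c d (xD_minus a b c d) \<le> 0"
    by linarith
  then have "r2 < xD_minus a b c d"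
    using roots(7) z_between \<open>z < xD_minus a b c d\<close> by auto
  have "(1 - a) * g_poly a b c d 0 > 0"
    using g_poly_zero_pos assms(1) by simp
  then have "r2 < 0"
    using roots(7)[of 0] z_between \<open>z < 0\<close> by auto
  moreover have "b < (2 - a) * r2"
    using z z_between assms(1) by (metis diff_gt_0_iff_gt mult_strict_left_mono one_less_numeral_iff
        order.strict_trans semiring_norm(76))
  ultimately show ?thesis
    using roots \<open>r2 < xD_minus a b c d\<close>
    by (intro that[OF roots(2) g_root_left_limit_point]) auto
qed

lemma left_limit_point_xg_minus_a_eq_1:
  assumes "a = 1" and "Fq a b c d > 0"
  obtains u where "xg_minus a b c d = complex_of_real u" and "left_limit_point a b c d u"
proof -
  have F: "Fq a b c d = d + b * (b + c)"
    using assms(1) by (simp add: Fq_def power2_eq_square algebra_simps)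
  have g: "g_poly a b c d x = - (b + c) * x - d" for x
    using assms(1) by (simp add: g_poly_def algebra_simps)
  have "b * (b + c) > 0"
    using assms(2) d F by linarith
  then have "b + c < 0"
    using b by (simp add: zero_less_mult_iff)
  define u where "u = - d / (b + c)"
  have root: "g_poly a b c d u = 0" and "u < 0"
    using \<open>b + c < 0\<close> d by (simp_all add: g u_def field_simps divide_neg_neg)
  have mono: "g_poly a b c d x < g_poly a b c d y \<longleftrightarrow> x < y" for x y
    unfolding g using \<open>b + c < 0\<close> by (simp add: mult_less_cancel_left_pos)
  have "0 \<le> 4 * g_poly a b c d (xD_minus a b c d)"
    unfolding g_poly_at_double_root[OF disc_xD_minus] by simp
  then have "u \<le> xD_minus a b c d"
    using mono[of "xD_minus a b c d" u] \<open>g_poly a b c d u = 0\<close> by linarith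
  moreover have "g_poly a b c d b < 0"
    using assms(2) F unfolding g by (simp add: algebra_simps)
  then have "b < (2 - a) * u"
    using mono[of b u] \<open>g_poly a b c d u = 0\<close> assms(1) by simp
  moreover have "xg_minus a b c d = complex_of_real u"
    using assms(1) \<open>b + c < 0\<close> by (simp add: xg_minus_def u_def)
  ultimately show ?thesis
    using root \<open>u < 0\<close> \<open>b + c < 0\<close> assms(1)
    by (intro that g_root_left_limit_point) auto
qed

lemma left_limit_point_xg_minus_a_gt_1:
  assumes "a > 1" and "\<not> (a < 2 \<and> Fq a b c d \<le> 0)"
  obtains u where "xg_minus a b c d = complex_of_real u" and "left_limit_point a b c d u"
proof -
  have "Deltag a b c d > 0"
    using assms(1) d by (simp add: Deltag_pos_of_gt_1)
  moreover have "a \<noteq> 1"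
    using assms(1) by simp
  ultimately obtain r1 r2 where roots: "xg_minus a b c d = complex_of_real r1"
    "xg_plus a b c d = complex_of_real r2" "r1 < r2" "g_poly a b c d r1 = 0" "g_poly a b c d r2 = 0"
    "\<And>x. (1 - a) * g_poly a b c d x < 0 \<longleftrightarrow> r1 < x \<and> x < r2"
    "\<And>x. (1 - a) * g_poly a b c d x \<le> 0 \<longleftrightarrow> r1 \<le> x \<and> x \<le> r2"
    "2 * (1 - a) * r1 - (b + c) \<noteq> 0" "2 * (1 - a) * r2 - (b + c) \<noteq> 0"
    using g_poly_roots by blast
  have "(1 - a) * g_poly a b c d 0 < 0"
    using g_poly_zero_pos assms(1) by (simp add: mult_neg_pos)
  then have "r1 < 0" "0 < r2"
    using roots(6) by auto
  have "0 \<le> 4 * g_poly a b c d (xD_minus a b c d)"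
    unfolding g_poly_at_double_root[OF disc_xD_minus] by simp
  then have "(1 - a) * g_poly a b c d (xD_minus a b c d) \<le> 0"
    using assms(1) by (simp add: mult_nonpos_nonneg)
  then have "r1 \<le> xD_minus a b c d"
    using roots(7) by auto
  moreover have "b < (2 - a) * r1"
  proof (cases "a \<ge> 2")
    case True
    then have "(2 - a) * r1 \<ge> 0"
      using \<open>r1 < 0\<close> by (simp add: mult_nonpos_nonpos)
    then show ?thesis
      using b by linarith
  next
    case False
    define z where "z = b / (2 - a)"
    have z: "(2 - a) * z = b" and "z < 0"
      using False b by (simp_all add: z_def divide_neg_pos)
    have "(2 - a) ^ 2 * g_poly a b c d z < 0"
      unfolding g_poly_at_z[OF z] using assms(2) False by simp
    then have "(1 - a) * g_poly a b c d z > 0"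
      using assms(1) by (simp add: mult_less_0_iff mult_neg_neg)
    then have "z < r1"
      using roots(7)[of z] \<open>z < 0\<close> \<open>0 < r2\<close> by auto
    then show ?thesis
      using z False by (metis diff_gt_0_iff_gt mult_strict_left_mono not_le)
  qed
  ultimately show ?thesis
    using roots \<open>r1 < 0\<close> by (intro that[OF roots(1) g_root_left_limit_point]) auto
qed

lemma left_limit_point_fst_uv: "\<exists>u. fst (uv a b c d) = complex_of_real u \<and> left_limit_point a b c d u"
proof -
  consider "a < 2 \<and> Fq a b c d \<le> 0" | "\<not> (a < 2 \<and> Fq a b c d \<le> 0)" "a > 1"
    | "a < 1" "Fq a b c d > 0" | "a = 1" "Fq a b c d > 0"
    by fastforce
  then show ?thesis
  proof cases
    case 1
    then show ?thesis
      using left_limit_point_xD_minus mult_xD_minus_le_b by (auto simp: uv_def)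
  next
    case 2
    then obtain u where "xg_minus a b c d = complex_of_real u" and "left_limit_point a b c d u"
      using left_limit_point_xg_minus_a_gt_1 by blast
    then show ?thesis
      using 2 by (auto simp: uv_def)
  next
    case 3
    then obtain u where "xg_plus a b c d = complex_of_real u" and "left_limit_point a b c d u"
      using left_limit_point_xg_plus by blast
    then show ?thesis
      using 3 by (auto simp: uv_def)
  next
    case 4
    then obtain u where "xg_minus a b c d = complex_of_real u" and "left_limit_point a b c d u"
      using left_limit_point_xg_minus_a_eq_1 by blast
    then show ?thesis
      using 4 by (auto simp: uv_def)
  qed
qed

end

theorem lemma3p2:
  fixes a b c d :: real
  assumes "a > 0" and "c > 0" and "b < 0" and "d < 0"
    and "xA a b < xB c d"
  shows "Im (fst (uv a b c d)) = 0 \<and> Im (snd (uv a b c d)) = 0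
    \<and> Re (fst (uv a b c d)) \<le> xD_minus a b c d
    \<and> xD_minus a b c d < xA a b
    \<and> xA a b < xD_plus a b c d
    \<and> xD_plus a b c d \<le> Re (snd (uv a b c d))
    \<and> Re (snd (uv a b c d)) < xB c d
    \<and> Re (fst (uv a b c d)) < 0 \<and> 0 < Re (snd (uv a b c d))
    \<and> (\<forall>n. (-1) ^ n * W a b c d n (Re (fst (uv a b c d))) > 0
           \<and> W a b c d n (Re (snd (uv a b c d))) > 0)
    \<and> limit_of_zeros a b c d (fst (uv a b c d))
    \<and> limit_of_zeros a b c d (snd (uv a b c d))"
proof -
  obtain u where u: "fst (uv a b c d) = complex_of_real u" "left_limit_point a b c d u"
    using left_limit_point_fst_uv[OF assms] by blast
  obtain v where v: "snd (uv a b c d) = complex_of_real v" "right_limit_point a b c d v"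
    using right_limit_point_snd_uv[OF assms] by blast
  show ?thesis
    using u v xD_minus_less_xA[OF assms] xA_less_xD_plus[OF assms]
    unfolding left_limit_point_def right_limit_point_def by simp
qed

end
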